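(* Let $n\ge0$ and $m\ge n+2$. Then for all formulas $\alpha$ and $\beta$, $\neg\circ^m\alpha\vdash_{L_n^{n+1}}\beta$.
   Context: Formulas are built from a countable set of propositional variables using unary $\neg,\circ$ and binary $\land,\lor,\to$; $\circ^0\alpha=\alpha$, $\circ^{m+1}\alpha=\circ(\circ^m\alpha)$, $\alpha\leftrightarrow\beta:=(\alpha\to\beta)\land(\beta\to\alpha)$. mbC is the Hilbert calculus with the axiom schemas of a standard axiomatization of positive classical propositional logic in $\land,\lor,\to$, plus (TND) $\alpha\lor\neg\alpha$ and (bc1) $\circ\alpha\to(\alpha\to(\neg\alpha\to\beta))$, modus ponens being the only rule; mbCciw is mbC plus (ciw) $\circ\alpha\lor(\alpha\land\neg\alpha)$. For $n\ge0$, $k\ge1$, $L_n^k$ is mbCciw plus (cc$^n$) $\circ^{n+2}\alpha$, (dn) $\neg\neg\alpha\leftrightarrow\alpha$, and (ip$^j$) $\neg\circ^j\neg\alpha\leftrightarrow\neg\circ^j\alpha$ for each $1\le j<k$. $\Gamma\vdash_L\alpha$ denotes derivability of $\alpha$ from $\Gamma$ in $L$. *)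

theory Defs
  imports Main
begin

datatype form =
    PVar nat
  | Neg form
  | Circ form
  | Conj form form
  | Disj form form
  | Imp form form

primrec circ_pow :: "nat \<Rightarrow> form \<Rightarrow> form" where
  "circ_pow 0 a = a"
| "circ_pow (Suc m) a = Circ (circ_pow m a)"

definition Iff :: "form \<Rightarrow> form \<Rightarrow> form" where
  "Iff a b = Conj (Imp a b) (Imp b a)"

inductive pos_ax :: "form \<Rightarrow> bool" where
  Ax1: "pos_ax (Imp a (Imp b a))"
| Ax2: "pos_ax (Imp (Imp a b) (Imp (Imp a (Imp b c)) (Imp a c)))"
| Ax3: "pos_ax (Imp a (Imp b (Conj a b)))"
| Ax4: "pos_ax (Imp (Conj a b) a)"
| Ax5: "pos_ax (Imp (Conj a b) b)"
| Ax6: "pos_ax (Imp a (Disj a b))"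
| Ax7: "pos_ax (Imp b (Disj a b))"
| Ax8: "pos_ax (Imp (Imp a c) (Imp (Imp b c) (Imp (Disj a b) c)))"
| Ax9: "pos_ax (Disj a (Imp a b))"

inductive mbC_ax :: "form \<Rightarrow> bool" where
  pos: "pos_ax a \<Longrightarrow> mbC_ax a"
| TND: "mbC_ax (Disj a (Neg a))"
| bc1: "mbC_ax (Imp (Circ a) (Imp a (Imp (Neg a) b)))"

inductive mbCciw_ax :: "form \<Rightarrow> bool" where
  mbC: "mbC_ax a \<Longrightarrow> mbCciw_ax a"
| ciw: "mbCciw_ax (Disj (Circ a) (Conj a (Neg a)))"

inductive L_ax :: "nat \<Rightarrow> nat \<Rightarrow> form \<Rightarrow> bool" for n k where
  base: "mbCciw_ax a \<Longrightarrow> L_ax n k a"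
| cc: "L_ax n k (circ_pow (n + 2) a)"
| dn: "L_ax n k (Iff (Neg (Neg a)) a)"
| ip: "1 \<le> j \<Longrightarrow> j < k \<Longrightarrow>
        L_ax n k (Iff (Neg (circ_pow j (Neg a))) (Neg (circ_pow j a)))"

inductive derivable :: "(form \<Rightarrow> bool) \<Rightarrow> form set \<Rightarrow> form \<Rightarrow> bool" for Ax where
  prem: "a \<in> \<Gamma> \<Longrightarrow> derivable Ax \<Gamma> a"
| ax: "Ax a \<Longrightarrow> derivable Ax \<Gamma> a"
| mp: "derivable Ax \<Gamma> a \<Longrightarrow> derivable Ax \<Gamma> (Imp a b) \<Longrightarrow> derivable Ax \<Gamma> b"

end

theory Submission
  imports Defs
begin

(* For m >= n + 2 both o^m alpha and o(o^m alpha) = o^(m+1) alpha are instances of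
   (cc^n), so o^m alpha is a theorem that is moreover marked consistent, and (bc1)
   makes it explode against the premise ~o^m alpha. *)

lemma circ_pow_add: "circ_pow (i + j) a = circ_pow i (circ_pow j a)"
  by (induction i) auto

lemma L_ax_circ_pow:
  assumes "n + 2 \<le> m"
  shows "L_ax n k (circ_pow m a)"
proof -
  have "circ_pow m a = circ_pow (n + 2) (circ_pow (m - (n + 2)) a)"
    using assms by (metis circ_pow_add le_add_diff_inverse)
  then show ?thesis
    by (simp only: L_ax.cc)
qed

lemma L_ax_mbC_ax: "mbC_ax a \<Longrightarrow> L_ax n k a"
  by (intro L_ax.base mbCciw_ax.mbC)

lemma derivable_explosion:
  assumes mbC: "\<And>a. mbC_ax a \<Longrightarrow> Ax a"
    and circ: "derivable Ax \<Gamma> (Circ a)"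
    and pos: "derivable Ax \<Gamma> a"
    and neg: "derivable Ax \<Gamma> (Neg a)"
  shows "derivable Ax \<Gamma> b"
proof -
  have "derivable Ax \<Gamma> (Imp (Circ a) (Imp a (Imp (Neg a) b)))"
    by (intro derivable.ax mbC mbC_ax.bc1)
  then show ?thesis
    using circ pos neg by (meson derivable.mp)
qed

lemma L_derivable_neg_circ_pow_explosion:
  assumes "n + 2 \<le> m"
    and "derivable (L_ax n k) \<Gamma> (Neg (circ_pow m a))"
  shows "derivable (L_ax n k) \<Gamma> b"
proof (rule derivable_explosion)
  show "L_ax n k c" if "mbC_ax c" for c
    using that by (rule L_ax_mbC_ax)
  show "derivable (L_ax n k) \<Gamma> (circ_pow m a)"
    using assms(1) by (intro derivable.ax L_ax_circ_pow)
  have "L_ax n k (circ_pow (Suc m) a)"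
    using assms(1) by (intro L_ax_circ_pow) simp
  then show "derivable (L_ax n k) \<Gamma> (Circ (circ_pow m a))"
    by (simp add: derivable.ax)
qed (fact assms(2))

theorem lemma3:
  fixes n m :: nat and \<alpha> \<beta> :: form
  assumes "m \<ge> n + 2"
  shows "derivable (L_ax n (n + 1)) {Neg (circ_pow m \<alpha>)} \<beta>"
  using assms by (rule L_derivable_neg_circ_pow_explosion[where a = \<alpha>]) (simp add: derivable.prem)

end
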